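(* Assume $f$ is odd. Then $\tau_q|_{Q_8\rtimes\mathbb{Z}}\simeq \operatorname{Ind}_C^{Q_8\rtimes\mathbb{Z}}\phi_1$.
   Context: All representations are over $\overline{\mathbb{Q}}_\ell$, $\ell$ an odd prime. Let $q=2^f$. Let $Q\subset \mathit{GL}_3(\mathbb{F}_4)$ be the group of matrices $g(\alpha,\beta,\gamma)=\begin{pmatrix}\alpha&\beta&\gamma\\0&\alpha^2&\beta^2\\0&0&\alpha\end{pmatrix}$ with $\alpha\in\mathbb{F}_4^\times$, $\beta,\gamma\in\mathbb{F}_4$, $\alpha\gamma^2+\alpha^2\gamma=\beta^3$. Let $Q\rtimes\mathbb{Z}$ be the semidirect product where $r\in\mathbb{Z}$ acts by $g(\alpha,\beta,\gamma)\mapsto g(\alpha^{q^r},\beta^{q^r},\gamma^{q^r})$. Fix $\bar\zeta_3\in\mathbb{F}_4\setminus\mathbb{F}_2$. Let $Q_8=\{g(1,\beta,\gamma)\in Q\}$; $C_4\subset Q_8$ the cyclic subgroup of order 4 generated by $g(1,1,\bar\zeta_3)$; $Z=\{g(1,0,0),g(1,0,1)\}$; $C_3=\{g(\alpha,0,0)\}$; $C_6=Z\times C_3$. Fix a faithful character $\phi$ of $C_4$ and $(-2)^{1/2}\in\overline{\mathbb{Q}}_\ell$, with $(-2)^{m/2}=((-2)^{1/2})^m$. Let $C\subset Q_8\rtimes\mathbb{Z}$ be the subgroup of $(g,n)$ with $g\in C_4$ if $n$ even and $g\in Q_8\setminus C_4$ if $n$ odd. Fix $\eta$ with $\eta^2+(-2)^{(f+1)/2}\eta+q=0$;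 let $\phi_1$ be the character of $C$ with $\phi_1((g(1,\bar\zeta_3,\bar\zeta_3),1))=\eta q^{-1}$, $\phi_1((g(1,0,0),2))=-q^{-1}$. Let $\phi_2$ be the character of $C_6\rtimes\mathbb{Z}$ with $\phi_2|_{C_6}=\phi|_Z\otimes 1_{C_3}$ and $\phi_2((g(1,0,0),1))=(-2)^{f/2}q^{-1}$. There is a surjective $Q\rtimes\mathbb{Z}$-homomorphism $\Psi\colon\operatorname{Ind}_C^{Q\rtimes\mathbb{Z}}\phi_1\to\operatorname{Ind}_{C_6\rtimes\mathbb{Z}}^{Q\rtimes\mathbb{Z}}\phi_2$, and the space of such homomorphisms is one-dimensional; $\tau_q$ is defined as the kernel of $\Psi$ (a two-dimensional representation of $Q\rtimes\mathbb{Z}$). *)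

theory Defs
  imports Complex_Main
begin

text \<open>F_4 is modelled as pairs (a,b) of bits standing for a + b*z, where z is the fixed
  element of F_4 outside F_2 (so z^2 = z + 1). Addition is xor, multiplication as below.\<close>

type_synonym f4 = "bool \<times> bool"

definition f4_zero :: f4 where "f4_zero = (False, False)"
definition f4_one :: f4 where "f4_one = (True, False)"
definition f4_zeta :: f4 where "f4_zeta = (False, True)"

fun f4_add :: "f4 \<Rightarrow> f4 \<Rightarrow> f4" where
  "f4_add (a, b) (c, d) = (a \<noteq> c, b \<noteq> d)"

fun f4_mul :: "f4 \<Rightarrow> f4 \<Rightarrow> f4" where
  "f4_mul (a, b) (c, d) = ((a \<and> c) \<noteq> (b \<and> d), ((a \<and> d) \<noteq> (b \<and> c)) \<noteq> (b \<and> d))"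

definition f4_pow :: "f4 \<Rightarrow> nat \<Rightarrow> f4" where
  "f4_pow x k = ((f4_mul x) ^^ k) f4_one"

definition f4_frob :: "f4 \<Rightarrow> f4" where
  "f4_frob x = f4_pow x 2"

text \<open>x \<mapsto> x^(q^r) for q = 2^f and r an integer: this is the (f*r)-th power of the
  absolute Frobenius, which only depends on f*r mod 2.\<close>
definition frobq :: "nat \<Rightarrow> int \<Rightarrow> f4 \<Rightarrow> f4" where
  "frobq f r x = (f4_frob ^^ nat ((int f * r) mod 2)) x"

type_synonym mat3 = "nat \<Rightarrow> nat \<Rightarrow> f4"

definition mat_mul :: "mat3 \<Rightarrow> mat3 \<Rightarrow> mat3" where
  "mat_mul A B = (\<lambda>i j. f4_add (f4_mul (A i 0) (B 0 j))
                        (f4_add (f4_mul (A i 1) (B 1 j)) (f4_mul (A i 2) (B 2 j))))"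

definition gmat :: "f4 \<Rightarrow> f4 \<Rightarrow> f4 \<Rightarrow> mat3" where
  "gmat a b c = (\<lambda>i j.
      if i = 0 \<and> j = 0 then a
      else if i = 0 \<and> j = 1 then b
      else if i = 0 \<and> j = 2 then c
      else if i = 1 \<and> j = 1 then f4_pow a 2
      else if i = 1 \<and> j = 2 then f4_pow b 2
      else if i = 2 \<and> j = 2 then a
      else f4_zero)"

definition Qgrp :: "mat3 set" where
  "Qgrp = {gmat a b c | a b c. a \<noteq> f4_zero \<and>
      f4_add (f4_mul a (f4_pow c 2)) (f4_mul (f4_pow a 2) c) = f4_pow b 3}"

definition mat_pow :: "mat3 \<Rightarrow> nat \<Rightarrow> mat3" where
  "mat_pow A k = ((mat_mul A) ^^ k) (gmat f4_one f4_zero f4_zero)"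

definition Q8 :: "mat3 set" where
  "Q8 = {M \<in> Qgrp. \<exists>b c. M = gmat f4_one b c}"

definition C4 :: "mat3 set" where
  "C4 = {mat_pow (gmat f4_one f4_one f4_zeta) k | k. True}"

definition Zgrp :: "mat3 set" where
  "Zgrp = {gmat f4_one f4_zero f4_zero, gmat f4_one f4_zero f4_one}"

definition C3 :: "mat3 set" where
  "C3 = {gmat a f4_zero f4_zero | a. a \<noteq> f4_zero}"

definition C6 :: "mat3 set" where
  "C6 = {mat_mul z c | z c. z \<in> Zgrp \<and> c \<in> C3}"

definition frob_mat :: "nat \<Rightarrow> int \<Rightarrow> mat3 \<Rightarrow> mat3" where
  "frob_mat f r A = (\<lambda>i j. frobq f r (A i j))"

fun sd_mul :: "nat \<Rightarrow> mat3 \<times> int \<Rightarrow> mat3 \<times> int \<Rightarrow> mat3 \<times> int" where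
  "sd_mul f (A, m) (B, n) = (mat_mul A (frob_mat f m B), m + n)"

definition QZ :: "(mat3 \<times> int) set" where
  "QZ = Qgrp \<times> UNIV"

definition Q8Z :: "(mat3 \<times> int) set" where
  "Q8Z = Q8 \<times> UNIV"

definition C6Z :: "(mat3 \<times> int) set" where
  "C6Z = C6 \<times> UNIV"

definition Cgrp :: "(mat3 \<times> int) set" where
  "Cgrp = {(g, n). (even n \<and> g \<in> C4) \<or> (odd n \<and> g \<in> Q8 - C4)}"

definition is_character :: "nat \<Rightarrow> (mat3 \<times> int) set \<Rightarrow> (mat3 \<times> int \<Rightarrow> complex) \<Rightarrow> bool" where
  "is_character f H \<chi> \<longleftrightarrow> (\<forall>x\<in>H. \<chi> x \<noteq> 0) \<and>
      (\<forall>x\<in>H. \<forall>y\<in>H. \<chi> (sd_mul f x y) = \<chi> x * \<chi> y)"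

text \<open>Model of Ind_H^G \<chi>: functions F on G (zero outside G) with F(h x) = \<chi>(h) F(x),
  G acting by right translation.\<close>
definition Ind :: "nat \<Rightarrow> (mat3 \<times> int) set \<Rightarrow> (mat3 \<times> int \<Rightarrow> complex)
                     \<Rightarrow> (mat3 \<times> int) set \<Rightarrow> (mat3 \<times> int \<Rightarrow> complex) set" where
  "Ind f H \<chi> G = {F. (\<forall>x. x \<notin> G \<longrightarrow> F x = 0) \<and>
                      (\<forall>h\<in>H. \<forall>x\<in>G. F (sd_mul f h x) = \<chi> h * F x)}"

definition ract :: "nat \<Rightarrow> (mat3 \<times> int) set \<Rightarrow> mat3 \<times> int
                      \<Rightarrow> (mat3 \<times> int \<Rightarrow> complex) \<Rightarrow> (mat3 \<times> int \<Rightarrow> complex)" where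
  "ract f G g F = (\<lambda>x. if x \<in> G then F (sd_mul f x g) else 0)"

definition rep_hom :: "'g set \<Rightarrow> ('g \<Rightarrow> ('x \<Rightarrow> complex) \<Rightarrow> ('x \<Rightarrow> complex))
     \<Rightarrow> ('g \<Rightarrow> ('y \<Rightarrow> complex) \<Rightarrow> ('y \<Rightarrow> complex))
     \<Rightarrow> ('x \<Rightarrow> complex) set \<Rightarrow> ('y \<Rightarrow> complex) set
     \<Rightarrow> (('x \<Rightarrow> complex) \<Rightarrow> ('y \<Rightarrow> complex)) \<Rightarrow> bool" where
  "rep_hom G actV actW V W \<Psi> \<longleftrightarrow>
     (\<forall>F\<in>V. \<Psi> F \<in> W) \<and>
     (\<forall>F1\<in>V. \<forall>F2\<in>V. \<Psi> (\<lambda>x. F1 x + F2 x) = (\<lambda>y. \<Psi> F1 y + \<Psi> F2 y)) \<and>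
     (\<forall>c. \<forall>F\<in>V. \<Psi> (\<lambda>x. c * F x) = (\<lambda>y. c * \<Psi> F y)) \<and>
     (\<forall>g\<in>G. \<forall>F\<in>V. \<Psi> (actV g F) = actW g (\<Psi> F))"

definition rep_iso where
  "rep_iso G actV actW V W \<Phi> \<longleftrightarrow> rep_hom G actV actW V W \<Phi> \<and> bij_betw \<Phi> V W"

end

theory Submission
  imports Defs
begin

text \<open>Let \<open>V = Ind(C, \<phi>\<^sub>1)\<close> (dimension 6) and \<open>W = Ind(C\<^sub>6 \<rtimes> \<int>, \<phi>\<^sub>2)\<close> (dimension 4),
  induced to \<open>Q \<rtimes> \<int>\<close>. Every \<open>F \<in> V\<close> is a combination of right translates of the function
  \<open>F\<^sub>0\<close> supported on \<open>C\<close>, with coefficients the values of \<open>F\<close> at six coset representatives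
  \<open>r\<^sub>j\<close>; hence \<open>\<Psi>\<close> is determined by \<open>G\<^sub>0 = \<Psi> F\<^sub>0\<close>. Decomposing the double cosets
  \<open>C\<^sub>6 s\<^sub>k r\<^sub>j\<^sup>-\<^sup>1 C\<close> shows that the value of \<open>\<Psi> F\<close> at the four representatives \<open>s\<^sub>k\<close> of
  \<open>W\<close> is \<open>G\<^sub>0(1)\<close> times an explicit \<open>4 \<times> 6\<close> matrix of powers of \<open>D = \<phi>\<^sub>1(t)/\<phi>\<^sub>2(1,1)\<close>
  applied to \<open>(F(r\<^sub>j))\<^sub>j\<close>. The equation for \<open>\<eta>\<close> forces \<open>D\<^sup>4 = -1\<close>, surjectivity of \<open>\<Psi>\<close>
  forces \<open>G\<^sub>0(1) \<noteq> 0\<close>, and for such \<open>D\<close> the kernel of the matrix is parametrised by the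
  first two coordinates. As \<open>r\<^sub>0, r\<^sub>1\<close> represent the two cosets of \<open>C\<close> in \<open>Q\<^sub>8 \<rtimes> \<int>\<close>,
  restriction to \<open>Q\<^sub>8 \<rtimes> \<int>\<close> maps \<open>ker \<Psi>\<close> isomorphically onto \<open>Ind(C, \<phi>\<^sub>1)\<close> induced
  only to \<open>Q\<^sub>8 \<rtimes> \<int>\<close>.\<close>

section \<open>The field \<open>\<bbbF>\<^sub>4\<close> and the matrices \<open>g(\<alpha>, \<beta>, \<gamma>)\<close>\<close>

definition f4_zeta2 :: f4 where "f4_zeta2 = (True, True)"

lemmas f4_defs = f4_zero_def f4_one_def f4_zeta_def f4_zeta2_def

lemma f4_cases [case_names zero one zeta zeta2]:
  obtains "x = f4_zero" | "x = f4_one" | "x = f4_zeta" | "x = f4_zeta2"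
  unfolding f4_defs by (cases x) auto

lemma f4_pow2: "f4_pow x 2 = f4_mul x x"
  by (cases x) (simp add: f4_pow_def f4_one_def numeral_2_eq_2)

lemma f4_pow3: "f4_pow x 3 = f4_mul x (f4_mul x x)"
  by (cases x) (simp add: f4_pow_def f4_one_def numeral_3_eq_3)

lemma f4_frob_eq: "f4_frob x = f4_mul x x"
  by (simp add: f4_frob_def f4_pow2)

lemma f4_add_assoc: "f4_add (f4_add x y) z = f4_add x (f4_add y z)"
  by (cases x; cases y; cases z) auto

lemma f4_add_comm: "f4_add x y = f4_add y x"
  by (cases x; cases y) auto

lemma f4_add_left_commute: "f4_add x (f4_add y z) = f4_add y (f4_add x z)"
  by (cases x; cases y; cases z) auto

lemma f4_mul_assoc: "f4_mul (f4_mul x y) z = f4_mul x (f4_mul y z)"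
  by (cases x; cases y; cases z) auto

lemma f4_mul_comm: "f4_mul x y = f4_mul y x"
  by (cases x; cases y) auto

lemma f4_mul_left_commute: "f4_mul x (f4_mul y z) = f4_mul y (f4_mul x z)"
  by (cases x; cases y; cases z) auto

lemma f4_distrib_left: "f4_mul x (f4_add y z) = f4_add (f4_mul x y) (f4_mul x z)"
  by (cases x; cases y; cases z) auto

lemma f4_distrib_right: "f4_mul (f4_add y z) x = f4_add (f4_mul y x) (f4_mul z x)"
  by (cases x; cases y; cases z) auto

lemmas f4_ring_simps = f4_add_assoc f4_add_comm f4_add_left_commute
  f4_mul_assoc f4_mul_comm f4_mul_left_commute f4_distrib_left f4_distrib_right

lemma f4_mul_zero [simp]: "f4_mul x f4_zero = f4_zero" "f4_mul f4_zero x = f4_zero"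
  unfolding f4_zero_def by (cases x; auto)+

lemma f4_add_zero [simp]: "f4_add x f4_zero = x" "f4_add f4_zero x = x"
  unfolding f4_zero_def by (cases x; auto)+

lemma f4_mul_one [simp]: "f4_mul x f4_one = x" "f4_mul f4_one x = x"
  unfolding f4_one_def by (cases x; auto)+

lemma f4_frob_add: "f4_frob (f4_add x y) = f4_add (f4_frob x) (f4_frob y)"
  unfolding f4_frob_eq by (cases x; cases y) auto

lemma f4_frob_mul: "f4_frob (f4_mul x y) = f4_mul (f4_frob x) (f4_frob y)"
  unfolding f4_frob_eq by (cases x; cases y) auto

lemma f4_frob_frob: "f4_frob (f4_frob x) = x"
  unfolding f4_frob_eq by (cases x) auto

lemma frobq_eq: "frobq f r x = (if odd (int f * r) then f4_frob x else x)"
proof -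
  have "(int f * r) mod 2 = 0 \<or> (int f * r) mod 2 = 1" by auto
  then show ?thesis unfolding frobq_def by (auto simp: odd_iff_mod_2_eq_one)
qed

lemma frobq_odd: "odd f \<Longrightarrow> frobq f n x = (if odd n then f4_frob x else x)"
  by (simp add: frobq_eq)

lemma frobq_add: "frobq f r (f4_add x y) = f4_add (frobq f r x) (frobq f r y)"
  by (simp add: frobq_eq f4_frob_add)

lemma frobq_mul: "frobq f r (f4_mul x y) = f4_mul (frobq f r x) (frobq f r y)"
  by (simp add: frobq_eq f4_frob_mul)

lemma frobq_zero [simp]: "frobq f r f4_zero = f4_zero"
  by (simp add: frobq_eq f4_frob_eq)

lemma frobq_one [simp]: "frobq f r f4_one = f4_one"
  by (simp add: frobq_eq f4_frob_eq)

lemma frobq_add_exp: "frobq f m (frobq f n x) = frobq f (m + n) x"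
  by (auto simp: frobq_eq f4_frob_frob algebra_simps)

lemma frobq_pow2: "frobq f r (f4_pow x 2) = f4_pow (frobq f r x) 2"
  by (simp add: f4_pow2 frobq_mul)

lemma mat_mul_assoc: "mat_mul (mat_mul A B) C = mat_mul A (mat_mul B C)"
  unfolding mat_mul_def by (intro ext) (simp add: f4_ring_simps)

lemma frob_mat_mul: "frob_mat f r (mat_mul A B) = mat_mul (frob_mat f r A) (frob_mat f r B)"
  unfolding mat_mul_def frob_mat_def by (simp add: frobq_add frobq_mul)

lemma frob_mat_add_exp: "frob_mat f m (frob_mat f n A) = frob_mat f (m + n) A"
  unfolding frob_mat_def by (simp add: frobq_add_exp)

lemma frob_mat_twice: "frob_mat f n (frob_mat f n A) = A"
  unfolding frob_mat_add_exp unfolding frob_mat_def by (simp add: frobq_eq)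

lemma frob_mat_uminus: "frob_mat f (- n) A = frob_mat f n A"
  unfolding frob_mat_def by (simp add: frobq_eq)

lemma sd_mul_assoc: "sd_mul f (sd_mul f x y) z = sd_mul f x (sd_mul f y z)"
  by (cases x; cases y; cases z) (simp add: mat_mul_assoc frob_mat_mul frob_mat_add_exp add.assoc)

lemma gmat_mul:
  "mat_mul (gmat a b c) (gmat a' b' c') =
     gmat (f4_mul a a') (f4_add (f4_mul a b') (f4_mul b (f4_pow a' 2)))
       (f4_add (f4_mul a c') (f4_add (f4_mul b (f4_pow b' 2)) (f4_mul c a')))"
proof (intro ext)
  fix i j :: nat
  have entry11: "f4_mul (f4_pow x 2) (f4_pow y 2) = f4_pow (f4_mul x y) 2" for x y
    unfolding f4_pow2 by (cases x rule: f4_cases; cases y rule: f4_cases) (simp_all add: f4_defs)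
  have entry12: "f4_add (f4_pow (f4_mul a b') 2) (f4_mul (f4_pow b 2) a')
      = f4_pow (f4_add (f4_mul a b') (f4_mul b (f4_pow a' 2))) 2"
    unfolding f4_pow2
    by (cases a rule: f4_cases; cases a' rule: f4_cases; cases b rule: f4_cases;
        cases b' rule: f4_cases) (simp_all add: f4_defs)
  consider "i = 0" | "i = 1" | "i = 2" | "i > 2" by linarith
  moreover consider "j = 0" | "j = 1" | "j = 2" | "j > 2" by linarith
  ultimately show "mat_mul (gmat a b c) (gmat a' b' c') i j =
      gmat (f4_mul a a') (f4_add (f4_mul a b') (f4_mul b (f4_pow a' 2)))
        (f4_add (f4_mul a c') (f4_add (f4_mul b (f4_pow b' 2)) (f4_mul c a'))) i j"
    by cases (simp_all add: mat_mul_def gmat_def entry11 entry12)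
qed

lemma frob_mat_gmat: "frob_mat f r (gmat a b c) = gmat (frobq f r a) (frobq f r b) (frobq f r c)"
  unfolding frob_mat_def gmat_def by (intro ext) (simp add: frobq_pow2)

lemma sd_mul_gmat:
  "sd_mul f (gmat a b c, m) (gmat a' b' c', n) =
     (let a' = frobq f m a'; b' = frobq f m b'; c' = frobq f m c' in
       (gmat (f4_mul a a') (f4_add (f4_mul a b') (f4_mul b (f4_pow a' 2)))
         (f4_add (f4_mul a c') (f4_add (f4_mul b (f4_pow b' 2)) (f4_mul c a'))), m + n))"
  by (simp add: frob_mat_gmat gmat_mul Let_def)

lemma gmat_eq_iff: "gmat a b c = gmat a' b' c' \<longleftrightarrow> a = a' \<and> b = b' \<and> c = c'"
proof
  assume "gmat a b c = gmat a' b' c'"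
  then have "gmat a b c 0 0 = gmat a' b' c' 0 0" "gmat a b c 0 1 = gmat a' b' c' 0 1"
    "gmat a b c 0 2 = gmat a' b' c' 0 2" by auto
  then show "a = a' \<and> b = b' \<and> c = c'" unfolding gmat_def by simp
qed simp

section \<open>The group \<open>Q \<rtimes> \<int>\<close> and its subgroups\<close>

definition in_Q :: "f4 \<Rightarrow> f4 \<Rightarrow> f4 \<Rightarrow> bool" where
  "in_Q a b c \<longleftrightarrow>
     a \<noteq> f4_zero \<and> f4_add (f4_mul a (f4_pow c 2)) (f4_mul (f4_pow a 2) c) = f4_pow b 3"

lemma in_Q_cases:
  assumes "in_Q a b c"
  obtains
    "a = f4_one" "b = f4_zero" "c = f4_zero" | "a = f4_one" "b = f4_zero" "c = f4_one"
  | "a = f4_one" "b = f4_one" "c = f4_zeta" | "a = f4_one" "b = f4_one" "c = f4_zeta2"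
  | "a = f4_one" "b = f4_zeta" "c = f4_zeta" | "a = f4_one" "b = f4_zeta" "c = f4_zeta2"
  | "a = f4_one" "b = f4_zeta2" "c = f4_zeta" | "a = f4_one" "b = f4_zeta2" "c = f4_zeta2"
  | "a = f4_zeta" "b = f4_zero" "c = f4_zero" | "a = f4_zeta" "b = f4_zero" "c = f4_zeta"
  | "a = f4_zeta" "b = f4_one" "c = f4_one" | "a = f4_zeta" "b = f4_one" "c = f4_zeta2"
  | "a = f4_zeta" "b = f4_zeta" "c = f4_one" | "a = f4_zeta" "b = f4_zeta" "c = f4_zeta2"
  | "a = f4_zeta" "b = f4_zeta2" "c = f4_one" | "a = f4_zeta" "b = f4_zeta2" "c = f4_zeta2"
  | "a = f4_zeta2" "b = f4_zero" "c = f4_zero" | "a = f4_zeta2" "b = f4_zero" "c = f4_zeta2"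
  | "a = f4_zeta2" "b = f4_one" "c = f4_one" | "a = f4_zeta2" "b = f4_one" "c = f4_zeta"
  | "a = f4_zeta2" "b = f4_zeta" "c = f4_one" | "a = f4_zeta2" "b = f4_zeta" "c = f4_zeta"
  | "a = f4_zeta2" "b = f4_zeta2" "c = f4_one" | "a = f4_zeta2" "b = f4_zeta2" "c = f4_zeta"
  using assms unfolding in_Q_def f4_pow2 f4_pow3
  by (cases a rule: f4_cases; cases b rule: f4_cases; cases c rule: f4_cases) (simp_all add: f4_defs)

lemma in_Q_mul:
  assumes "in_Q a b c" and "in_Q a' b' c'"
  shows "in_Q (f4_mul a a') (f4_add (f4_mul a b') (f4_mul b (f4_pow a' 2)))
           (f4_add (f4_mul a c') (f4_add (f4_mul b (f4_pow b' 2)) (f4_mul c a')))"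
  using assms by (elim in_Q_cases) (simp_all add: in_Q_def f4_pow2 f4_pow3 f4_defs)

lemma in_Q_frobq: "in_Q a b c \<Longrightarrow> in_Q (frobq f n a) (frobq f n b) (frobq f n c)"
  by (erule in_Q_cases) (simp_all add: frobq_eq in_Q_def f4_pow2 f4_pow3 f4_frob_eq f4_defs)

lemma gmat_Qgrp_iff: "gmat a b c \<in> Qgrp \<longleftrightarrow> in_Q a b c"
  unfolding Qgrp_def in_Q_def mem_Collect_eq gmat_eq_iff by blast

lemma gmat_QZ_iff: "(gmat a b c, n) \<in> QZ \<longleftrightarrow> in_Q a b c"
  unfolding QZ_def by (simp add: gmat_Qgrp_iff)

lemma QZ_elim:
  assumes "x \<in> QZ"
  obtains a b c n where "x = (gmat a b c, n)" and "in_Q a b c"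
  using assms unfolding QZ_def Qgrp_def in_Q_def by (cases x) auto

lemma QZ_mul: "x \<in> QZ \<Longrightarrow> y \<in> QZ \<Longrightarrow> sd_mul f x y \<in> QZ"
  by (elim QZ_elim) (simp add: frob_mat_gmat gmat_mul gmat_QZ_iff in_Q_mul in_Q_frobq)

definition one_QZ :: "mat3 \<times> int" where
  "one_QZ = (gmat f4_one f4_zero f4_zero, 0)"

text \<open>\<open>g(a, b, c)\<^sup>-\<^sup>1 = g(a\<^sup>2, b, a\<^sup>2b\<^sup>3 + ac)\<close> since \<open>a\<^sup>3 = 1\<close> and the characteristic is 2;
  moreover \<open>r\<^sub>-\<^sub>n = r\<^sub>n\<close>.\<close>
fun inv_QZ :: "nat \<Rightarrow> mat3 \<times> int \<Rightarrow> mat3 \<times> int" where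
  "inv_QZ f (M, n) =
     (let a = M 0 0; b = M 0 1; c = M 0 2 in
       (frob_mat f n (gmat (f4_pow a 2) b (f4_add (f4_mul (f4_pow a 2) (f4_pow b 3)) (f4_mul a c))), - n))"

lemma inv_QZ_gmat:
  "inv_QZ f (gmat a b c, n) =
     (frob_mat f n (gmat (f4_pow a 2) b (f4_add (f4_mul (f4_pow a 2) (f4_pow b 3)) (f4_mul a c))), - n)"
  by (simp add: gmat_def)

declare inv_QZ.simps [simp del]

lemma one_QZ_mem: "one_QZ \<in> QZ"
  unfolding one_QZ_def gmat_QZ_iff in_Q_def by (simp add: f4_pow2 f4_pow3 f4_defs)

lemma one_QZ_left: "x \<in> QZ \<Longrightarrow> sd_mul f one_QZ x = x"
  by (elim QZ_elim) (simp add: one_QZ_def frob_mat_gmat gmat_mul frobq_eq)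

lemma one_QZ_right: "x \<in> QZ \<Longrightarrow> sd_mul f x one_QZ = x"
  by (elim QZ_elim) (simp add: one_QZ_def frob_mat_gmat gmat_mul f4_pow2)

lemma inv_QZ_mem:
  assumes "x \<in> QZ"
  shows "inv_QZ f x \<in> QZ"
proof -
  obtain a b c n where x: "x = (gmat a b c, n)" "in_Q a b c" using assms by (rule QZ_elim)
  have "in_Q (f4_pow a 2) b (f4_add (f4_mul (f4_pow a 2) (f4_pow b 3)) (f4_mul a c))"
    using x(2) by (elim in_Q_cases) (simp_all add: in_Q_def f4_pow2 f4_pow3 f4_defs)
  then show ?thesis unfolding x(1) inv_QZ_gmat frob_mat_gmat gmat_QZ_iff by (rule in_Q_frobq)
qed

lemma inv_QZ_right:
  assumes "x \<in> QZ"
  shows "sd_mul f x (inv_QZ f x) = one_QZ"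
proof -
  obtain a b c n where x: "x = (gmat a b c, n)" "in_Q a b c" using assms by (rule QZ_elim)
  from x(2) show ?thesis unfolding x(1) inv_QZ_gmat sd_mul.simps frob_mat_twice one_QZ_def
    by (elim in_Q_cases) (simp_all add: gmat_mul f4_pow2 f4_pow3 f4_defs)
qed

lemma inv_QZ_left:
  assumes "x \<in> QZ"
  shows "sd_mul f (inv_QZ f x) x = one_QZ"
proof -
  obtain a b c n where x: "x = (gmat a b c, n)" "in_Q a b c" using assms by (rule QZ_elim)
  from x(2) show ?thesis
    unfolding x(1) inv_QZ_gmat sd_mul.simps frob_mat_uminus frob_mat_mul[symmetric] one_QZ_def
    by (elim in_Q_cases) (simp_all add: gmat_mul frob_mat_gmat frobq_eq f4_frob_eq f4_pow2 f4_pow3 f4_defs)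
qed

definition subgroup_QZ :: "nat \<Rightarrow> (mat3 \<times> int) set \<Rightarrow> bool" where
  "subgroup_QZ f H \<longleftrightarrow> H \<subseteq> QZ \<and> one_QZ \<in> H \<and>
     (\<forall>x\<in>H. \<forall>y\<in>H. sd_mul f x y \<in> H) \<and> (\<forall>x\<in>H. inv_QZ f x \<in> H)"

lemma subgroup_QZ_mul_left_iff:
  assumes H: "subgroup_QZ f H" and h: "h \<in> H" and x: "x \<in> QZ"
  shows "sd_mul f h x \<in> H \<longleftrightarrow> x \<in> H"
proof
  have hQ: "h \<in> QZ" using H h unfolding subgroup_QZ_def by auto
  assume "sd_mul f h x \<in> H"
  then have "sd_mul f (inv_QZ f h) (sd_mul f h x) \<in> H"
    using H h unfolding subgroup_QZ_def by blast
  then show "x \<in> H" by (simp add: sd_mul_assoc[symmetric] inv_QZ_left[OF hQ] one_QZ_left[OF x])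
qed (use H h in \<open>auto simp: subgroup_QZ_def\<close>)

lemma subgroup_QZ_mul_right_iff:
  assumes H: "subgroup_QZ f H" and h: "h \<in> H" and x: "x \<in> QZ"
  shows "sd_mul f x h \<in> H \<longleftrightarrow> x \<in> H"
proof
  have hQ: "h \<in> QZ" using H h unfolding subgroup_QZ_def by auto
  assume "sd_mul f x h \<in> H"
  then have "sd_mul f (sd_mul f x h) (inv_QZ f h) \<in> H"
    using H h unfolding subgroup_QZ_def by blast
  then show "x \<in> H" by (simp add: sd_mul_assoc inv_QZ_right[OF hQ] one_QZ_right[OF x])
qed (use H h in \<open>auto simp: subgroup_QZ_def\<close>)

lemma character_one:
  assumes \<chi>: "is_character f H \<chi>" and one: "one_QZ \<in> H"
  shows "\<chi> one_QZ = 1"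
proof -
  have "\<chi> one_QZ = \<chi> (sd_mul f one_QZ one_QZ)" by (simp add: one_QZ_left one_QZ_mem)
  also have "\<dots> = \<chi> one_QZ * \<chi> one_QZ" using \<chi> one unfolding is_character_def by blast
  finally show ?thesis using \<chi> one unfolding is_character_def by (metis mult_cancel_left1)
qed

definition in_C4 :: "f4 \<Rightarrow> f4 \<Rightarrow> f4 \<Rightarrow> bool" where
  "in_C4 a b c \<longleftrightarrow> a = f4_one \<and>
     (b = f4_zero \<and> c = f4_zero \<or> b = f4_one \<and> c = f4_zeta \<or>
      b = f4_zero \<and> c = f4_one \<or> b = f4_one \<and> c = f4_zeta2)"

lemma C4_eq:
  "C4 = {gmat f4_one f4_zero f4_zero, gmat f4_one f4_one f4_zeta,
         gmat f4_one f4_zero f4_one, gmat f4_one f4_one f4_zeta2}" (is "_ = ?S")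
proof
  let ?u = "gmat f4_one f4_one f4_zeta"
  have mat_pow_Suc: "mat_pow A (Suc k) = mat_mul A (mat_pow A k)" for A k
    unfolding mat_pow_def by simp
  have "mat_pow ?u k \<in> ?S" for k
    by (induction k) (auto simp: mat_pow_def gmat_mul f4_pow2 f4_defs)
  then show "C4 \<subseteq> ?S" unfolding C4_def by auto
  have p0: "mat_pow ?u 0 = gmat f4_one f4_zero f4_zero" by (simp add: mat_pow_def)
  have p1: "mat_pow ?u (Suc 0) = ?u"
    unfolding mat_pow_Suc p0 by (simp add: gmat_mul f4_pow2 f4_defs)
  have p2: "mat_pow ?u (Suc (Suc 0)) = gmat f4_one f4_zero f4_one"
    unfolding mat_pow_Suc[of _ "Suc 0"] p1 by (simp add: gmat_mul f4_pow2 f4_defs)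
  have p3: "mat_pow ?u (Suc (Suc (Suc 0))) = gmat f4_one f4_one f4_zeta2"
    unfolding mat_pow_Suc[of _ "Suc (Suc 0)"] p2 by (simp add: gmat_mul f4_pow2 f4_defs)
  show "?S \<subseteq> C4" unfolding C4_def by (auto simp del: One_nat_def) (metis p0 p1 p2 p3)+
qed

lemma gmat_C4_iff: "gmat a b c \<in> C4 \<longleftrightarrow> in_C4 a b c"
  unfolding C4_eq in_C4_def by (auto simp: gmat_eq_iff)

lemma gmat_Q8_iff: "gmat a b c \<in> Q8 \<longleftrightarrow> in_Q a b c \<and> a = f4_one"
  unfolding Q8_def by (auto simp: gmat_Qgrp_iff gmat_eq_iff)

definition in_C :: "int \<Rightarrow> f4 \<Rightarrow> f4 \<Rightarrow> f4 \<Rightarrow> bool" where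
  "in_C n a b c \<longleftrightarrow> a = f4_one \<and>
     (if even n then in_C4 a b c else (b = f4_zeta \<or> b = f4_zeta2) \<and> (c = f4_zeta \<or> c = f4_zeta2))"

lemma gmat_C_iff: "(gmat a b c, n) \<in> Cgrp \<longleftrightarrow> in_C n a b c"
proof -
  have "in_Q a b c \<and> a = f4_one \<and> \<not> in_C4 a b c \<longleftrightarrow>
      a = f4_one \<and> (b = f4_zeta \<or> b = f4_zeta2) \<and> (c = f4_zeta \<or> c = f4_zeta2)"
    unfolding in_Q_def in_C4_def f4_pow2 f4_pow3
    by (cases a rule: f4_cases; cases b rule: f4_cases; cases c rule: f4_cases) (simp_all add: f4_defs)
  moreover have "in_C4 a b c \<Longrightarrow> a = f4_one" by (simp add: in_C4_def)
  ultimately show ?thesis unfolding Cgrp_def in_C_def by (auto simp: gmat_C4_iff gmat_Q8_iff)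
qed

lemma C_elim:
  assumes "x \<in> Cgrp"
  obtains a b c n where "x = (gmat a b c, n)" and "in_C n a b c"
proof -
  obtain M n where x: "x = (M, n)" and "M \<in> C4 \<or> M \<in> Q8" using assms unfolding Cgrp_def by auto
  then obtain a b c where "M = gmat a b c" unfolding C4_eq Q8_def by blast
  then show ?thesis using that assms x gmat_C_iff by blast
qed

lemma in_C_cases:
  assumes "in_C n a b c"
  obtains
    "even n" "a = f4_one" "b = f4_zero" "c = f4_zero" | "even n" "a = f4_one" "b = f4_one" "c = f4_zeta"
  | "even n" "a = f4_one" "b = f4_zero" "c = f4_one" | "even n" "a = f4_one" "b = f4_one" "c = f4_zeta2"
  | "odd n" "a = f4_one" "b = f4_zeta" "c = f4_zeta" | "odd n" "a = f4_one" "b = f4_zeta" "c = f4_zeta2"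
  | "odd n" "a = f4_one" "b = f4_zeta2" "c = f4_zeta" | "odd n" "a = f4_one" "b = f4_zeta2" "c = f4_zeta2"
  using assms unfolding in_C_def in_C4_def by (auto split: if_splits)

lemma subgroup_C:
  assumes f: "odd f"
  shows "subgroup_QZ f Cgrp"
  unfolding subgroup_QZ_def
proof (intro conjI ballI subsetI)
  fix x assume "x \<in> Cgrp"
  then obtain a b c n where x: "x = (gmat a b c, n)" "in_C n a b c" by (rule C_elim)
  from x(2) show "x \<in> QZ" unfolding x(1) gmat_QZ_iff
    by (elim in_C_cases) (simp_all add: in_Q_def f4_pow2 f4_pow3 f4_defs)
  from x(2) show "inv_QZ f x \<in> Cgrp" unfolding x(1) inv_QZ_gmat frob_mat_gmat gmat_C_iff
    by (elim in_C_cases) (simp_all add: frobq_odd[OF f] in_C_def in_C4_def f4_pow2 f4_pow3 f4_frob_eq f4_defs)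
next
  show "one_QZ \<in> Cgrp" unfolding one_QZ_def gmat_C_iff in_C_def in_C4_def by simp
next
  fix x y assume "x \<in> Cgrp" "y \<in> Cgrp"
  then obtain a b c m a' b' c' n where x: "x = (gmat a b c, m)" "in_C m a b c"
    and y: "y = (gmat a' b' c', n)" "in_C n a' b' c'" by (metis C_elim)
  from x(2) y(2) show "sd_mul f x y \<in> Cgrp" unfolding x(1) y(1) sd_mul_gmat Let_def gmat_C_iff
    by (elim in_C_cases) (simp_all add: frobq_odd[OF f] in_C_def in_C4_def f4_pow2 f4_frob_eq f4_defs)
qed

definition in_C6 :: "f4 \<Rightarrow> f4 \<Rightarrow> f4 \<Rightarrow> bool" where
  "in_C6 a b c \<longleftrightarrow> a \<noteq> f4_zero \<and> b = f4_zero \<and> (c = f4_zero \<or> c = a)"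

lemma gmat_C6_iff: "gmat a b c \<in> C6 \<longleftrightarrow> in_C6 a b c"
proof
  assume "gmat a b c \<in> C6"
  then obtain z d where "gmat a b c = mat_mul z d" "z \<in> Zgrp" "d \<in> C3" unfolding C6_def by blast
  then show "in_C6 a b c" unfolding Zgrp_def C3_def in_C6_def by (auto simp: gmat_mul gmat_eq_iff f4_pow2)
next
  assume h: "in_C6 a b c"
  have "gmat f4_one f4_zero f4_zero \<in> Zgrp" "gmat f4_one f4_zero f4_one \<in> Zgrp"
    unfolding Zgrp_def by auto
  moreover have "gmat a f4_zero f4_zero \<in> C3" using h unfolding C3_def in_C6_def by blast
  moreover have "gmat a b c = mat_mul (gmat f4_one f4_zero f4_zero) (gmat a f4_zero f4_zero) \<or>
      gmat a b c = mat_mul (gmat f4_one f4_zero f4_one) (gmat a f4_zero f4_zero)"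
    using h unfolding in_C6_def by (auto simp: gmat_mul gmat_eq_iff f4_pow2)
  ultimately show "gmat a b c \<in> C6" unfolding C6_def by blast
qed

lemma gmat_C6Z_iff: "(gmat a b c, n) \<in> C6Z \<longleftrightarrow> in_C6 a b c"
  unfolding C6Z_def by (simp add: gmat_C6_iff)

lemma C6Z_elim:
  assumes "x \<in> C6Z"
  obtains a b c n where "x = (gmat a b c, n)" and "in_C6 a b c"
proof -
  obtain M n where x: "x = (M, n)" and "M \<in> C6" using assms unfolding C6Z_def by auto
  then obtain z d where "M = mat_mul z d" "z \<in> Zgrp" "d \<in> C3" unfolding C6_def by blast
  then have "\<exists>a b c. M = gmat a b c" unfolding Zgrp_def C3_def by (auto simp: gmat_mul simp del: split_paired_Ex; blast)
  then show ?thesis using that assms x gmat_C6Z_iff by blast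
qed

lemma in_C6_cases:
  assumes "in_C6 a b c"
  obtains
    "a = f4_one" "b = f4_zero" "c = f4_zero" | "a = f4_zeta" "b = f4_zero" "c = f4_zero"
  | "a = f4_zeta2" "b = f4_zero" "c = f4_zero" | "a = f4_one" "b = f4_zero" "c = f4_one"
  | "a = f4_zeta" "b = f4_zero" "c = f4_zeta" | "a = f4_zeta2" "b = f4_zero" "c = f4_zeta2"
  using assms unfolding in_C6_def by (cases a rule: f4_cases) auto

lemma subgroup_C6Z: "subgroup_QZ f C6Z"
  unfolding subgroup_QZ_def
proof (intro conjI ballI subsetI)
  fix x assume "x \<in> C6Z"
  then obtain a b c n where x: "x = (gmat a b c, n)" "in_C6 a b c" by (rule C6Z_elim)
  from x(2) show "x \<in> QZ" unfolding x(1) gmat_QZ_iff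
    by (elim in_C6_cases) (simp_all add: in_Q_def f4_pow2 f4_pow3 f4_defs)
  from x(2) show "inv_QZ f x \<in> C6Z" unfolding x(1) inv_QZ_gmat frob_mat_gmat gmat_C6Z_iff
    by (elim in_C6_cases) (simp_all add: frobq_eq in_C6_def f4_pow2 f4_pow3 f4_frob_eq f4_defs)
next
  show "one_QZ \<in> C6Z" unfolding one_QZ_def gmat_C6Z_iff in_C6_def by (simp add: f4_defs)
next
  fix x y assume "x \<in> C6Z" "y \<in> C6Z"
  then obtain a b c m a' b' c' n where x: "x = (gmat a b c, m)" "in_C6 a b c"
    and y: "y = (gmat a' b' c', n)" "in_C6 a' b' c'" by (metis C6Z_elim)
  from x(2) y(2) show "sd_mul f x y \<in> C6Z" unfolding x(1) y(1) sd_mul_gmat Let_def gmat_C6Z_iff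
    by (elim in_C6_cases) (simp_all add: frobq_eq in_C6_def f4_pow2 f4_frob_eq f4_defs)
qed

lemma gmat_Q8Z_iff: "(gmat a b c, n) \<in> Q8Z \<longleftrightarrow> in_Q a b c \<and> a = f4_one"
  unfolding Q8Z_def by (simp add: gmat_Q8_iff)

lemma Q8Z_subset_QZ: "Q8Z \<subseteq> QZ"
  unfolding Q8Z_def QZ_def Q8_def by auto

lemma Q8Z_mul:
  assumes "x \<in> Q8Z" and "y \<in> Q8Z"
  shows "sd_mul f x y \<in> Q8Z"
proof -
  obtain a b c m where x: "x = (gmat a b c, m)" "in_Q a b c" "a = f4_one"
    using assms(1) Q8Z_subset_QZ by (auto elim!: QZ_elim simp: gmat_Q8Z_iff)
  obtain a' b' c' n where y: "y = (gmat a' b' c', n)" "in_Q a' b' c'" "a' = f4_one"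
    using assms(2) Q8Z_subset_QZ by (auto elim!: QZ_elim simp: gmat_Q8Z_iff)
  show ?thesis using in_Q_mul[OF x(2) in_Q_frobq[OF y(2)]] x(3) y(3)
    unfolding x(1) y(1) sd_mul_gmat Let_def gmat_Q8Z_iff by simp
qed

lemma C_subset_Q8Z: "Cgrp \<subseteq> Q8Z"
  unfolding Cgrp_def Q8Z_def Q8_def C4_eq by (auto simp: gmat_Qgrp_iff in_Q_def f4_pow2 f4_pow3 f4_defs)

section \<open>Induced representations\<close>

lemma Ind_zero: "(\<lambda>x. 0) \<in> Ind f H \<chi> X"
  unfolding Ind_def by simp

lemma Ind_add: "F1 \<in> Ind f H \<chi> X \<Longrightarrow> F2 \<in> Ind f H \<chi> X \<Longrightarrow> (\<lambda>x. F1 x + F2 x) \<in> Ind f H \<chi> X"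
  unfolding Ind_def by (simp add: distrib_left)

lemma Ind_smult: "F \<in> Ind f H \<chi> X \<Longrightarrow> (\<lambda>x. c * F x) \<in> Ind f H \<chi> X"
  unfolding Ind_def by (simp add: mult.left_commute)

lemma Ind_sum:
  "(\<And>j. j < (m::nat) \<Longrightarrow> Fs j \<in> Ind f H \<chi> X) \<Longrightarrow> (\<lambda>x. \<Sum>j<m. a j * Fs j x) \<in> Ind f H \<chi> X"
proof (induction m)
  case 0
  then show ?case using Ind_zero by simp
next
  case (Suc m)
  then show ?case using Ind_add[OF Suc.IH Ind_smult[of "Fs m"]] by simp
qed

lemma Ind_equivariant: "F \<in> Ind f H \<chi> X \<Longrightarrow> h \<in> H \<Longrightarrow> x \<in> X \<Longrightarrow> F (sd_mul f h x) = \<chi> h * F x"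
  unfolding Ind_def by blast

lemma Ind_outside: "F \<in> Ind f H \<chi> X \<Longrightarrow> x \<notin> X \<Longrightarrow> F x = 0"
  unfolding Ind_def by blast

lemma ract_Ind:
  assumes F: "F \<in> Ind f H \<chi> QZ" and g: "g \<in> QZ" and H: "H \<subseteq> QZ"
  shows "ract f QZ g F \<in> Ind f H \<chi> QZ"
  unfolding Ind_def mem_Collect_eq
proof (intro conjI allI impI ballI)
  fix x assume "x \<notin> QZ"
  then show "ract f QZ g F x = 0" unfolding ract_def by simp
next
  fix h x assume h: "h \<in> H" and x: "x \<in> QZ"
  have "sd_mul f h x \<in> QZ" using QZ_mul h H x by blast
  then show "ract f QZ g F (sd_mul f h x) = \<chi> h * ract f QZ g F x"
    unfolding ract_def using x Ind_equivariant[OF F h QZ_mul[OF x g]] by (simp add: sd_mul_assoc)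
qed

lemma rep_hom_Ind_sum:
  assumes \<Psi>: "rep_hom G actV actW (Ind f H \<chi> X) W \<Psi>"
    and Fs: "\<And>j. j < m \<Longrightarrow> Fs j \<in> Ind f H \<chi> X"
  shows "\<Psi> (\<lambda>x. \<Sum>j<(m::nat). a j * Fs j x) = (\<lambda>y. \<Sum>j<m. a j * \<Psi> (Fs j) y)"
  using Fs
proof (induction m)
  case 0
  have "\<forall>c. \<forall>F\<in>Ind f H \<chi> X. \<Psi> (\<lambda>x. c * F x) = (\<lambda>y. c * \<Psi> F y)"
    using \<Psi> unfolding rep_hom_def by blast
  from this[rule_format, where c = 0 and F = "\<lambda>x. 0"] show ?case by (simp add: Ind_zero)
next
  case (Suc m)
  have "(\<lambda>x. \<Sum>j<m. a j * Fs j x) \<in> Ind f H \<chi> X" "(\<lambda>x. a m * Fs m x) \<in> Ind f H \<chi> X"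
    using Suc.prems by (simp_all add: Ind_sum Ind_smult)
  moreover have "\<Psi> (\<lambda>x. a m * Fs m x) = (\<lambda>y. a m * \<Psi> (Fs m) y)"
    using \<Psi> Suc.prems unfolding rep_hom_def by blast
  ultimately show ?case using \<Psi> Suc unfolding rep_hom_def by simp
qed

definition zero_extension :: "(mat3 \<times> int) set \<Rightarrow> (mat3 \<times> int \<Rightarrow> complex) \<Rightarrow> mat3 \<times> int \<Rightarrow> complex" where
  "zero_extension H \<chi> x = (if x \<in> H then \<chi> x else 0)"

lemma zero_extension_Ind:
  assumes H: "subgroup_QZ f H" and \<chi>: "is_character f H \<chi>"
  shows "zero_extension H \<chi> \<in> Ind f H \<chi> QZ"
  unfolding Ind_def mem_Collect_eq
proof (intro conjI allI impI ballI)
  fix x assume "x \<notin> QZ"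
  then show "zero_extension H \<chi> x = 0" using H unfolding zero_extension_def subgroup_QZ_def by auto
next
  fix h x assume h: "h \<in> H" and x: "x \<in> QZ"
  show "zero_extension H \<chi> (sd_mul f h x) = \<chi> h * zero_extension H \<chi> x"
    using subgroup_QZ_mul_left_iff[OF H h x] \<chi> h unfolding zero_extension_def is_character_def by auto
qed

lemma ract_zero_extension:
  assumes H: "subgroup_QZ f H" and \<chi>: "is_character f H \<chi>" and c: "c \<in> H"
  shows "ract f QZ c (zero_extension H \<chi>) = (\<lambda>x. \<chi> c * zero_extension H \<chi> x)"
proof
  fix x
  show "ract f QZ c (zero_extension H \<chi>) x = \<chi> c * zero_extension H \<chi> x"
  proof (cases "x \<in> QZ")
    case True
    then show ?thesis
      using subgroup_QZ_mul_right_iff[OF H c True] \<chi> c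
      unfolding ract_def zero_extension_def is_character_def by (auto simp: mult.commute)
  next
    case False
    then show ?thesis using H unfolding ract_def zero_extension_def subgroup_QZ_def by auto
  qed
qed

definition restrict_Q8Z :: "(mat3 \<times> int \<Rightarrow> complex) \<Rightarrow> mat3 \<times> int \<Rightarrow> complex" where
  "restrict_Q8Z F x = (if x \<in> Q8Z then F x else 0)"

lemma restrict_Q8Z_Ind:
  assumes F: "F \<in> Ind f Cgrp \<chi> QZ"
  shows "restrict_Q8Z F \<in> Ind f Cgrp \<chi> Q8Z"
  unfolding Ind_def mem_Collect_eq
proof (intro conjI allI impI ballI)
  fix x assume "x \<notin> Q8Z"
  then show "restrict_Q8Z F x = 0" unfolding restrict_Q8Z_def by simp
next
  fix h x assume h: "h \<in> Cgrp" and x: "x \<in> Q8Z"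
  have "sd_mul f h x \<in> Q8Z" using Q8Z_mul C_subset_Q8Z h x by blast
  then show "restrict_Q8Z F (sd_mul f h x) = \<chi> h * restrict_Q8Z F x"
    unfolding restrict_Q8Z_def using x Ind_equivariant[OF F h, of x] Q8Z_subset_QZ by auto
qed

lemma restrict_Q8Z_ract:
  assumes "g \<in> Q8Z"
  shows "restrict_Q8Z (ract f QZ g F) = ract f Q8Z g (restrict_Q8Z F)"
proof
  fix x
  show "restrict_Q8Z (ract f QZ g F) x = ract f Q8Z g (restrict_Q8Z F) x"
    using assms Q8Z_mul[of x g f] Q8Z_subset_QZ unfolding restrict_Q8Z_def ract_def by auto
qed

section \<open>Coset representatives\<close>

definition C_rep :: "nat \<Rightarrow> mat3 \<times> int" where
  "C_rep j =
     [(gmat f4_one f4_zero f4_zero, 0), (gmat f4_one f4_zeta f4_zeta, 0),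
      (gmat f4_zeta f4_zero f4_zero, 0), (gmat f4_zeta f4_one f4_zeta2, 0),
      (gmat f4_zeta2 f4_zero f4_zero, 0), (gmat f4_zeta2 f4_zeta2 f4_one, 0)] ! j"

definition C6_rep :: "nat \<Rightarrow> mat3 \<times> int" where
  "C6_rep k =
     [(gmat f4_one f4_zero f4_zero, 0), (gmat f4_one f4_one f4_zeta, 0),
      (gmat f4_one f4_zeta f4_zeta, 0), (gmat f4_one f4_zeta2 f4_zeta, 0)] ! k"

lemma less_6_cases: "j < (6::nat) \<longleftrightarrow> j = 0 \<or> j = 1 \<or> j = 2 \<or> j = 3 \<or> j = 4 \<or> j = 5"
  by auto

lemma less_4_cases: "k < (4::nat) \<longleftrightarrow> k = 0 \<or> k = 1 \<or> k = 2 \<or> k = 3"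
  by auto

lemma less_8_cases: "i < (8::nat) \<longleftrightarrow> i = 0 \<or> i = 1 \<or> i = 2 \<or> i = 3 \<or> i = 4 \<or> i = 5 \<or> i = 6 \<or> i = 7"
  by auto

lemma C_rep_QZ: "j < 6 \<Longrightarrow> C_rep j \<in> QZ"
  unfolding less_6_cases by (elim disjE) (simp_all add: C_rep_def gmat_QZ_iff in_Q_def f4_pow2 f4_pow3 f4_defs)

lemma C6_rep_QZ: "k < 4 \<Longrightarrow> C6_rep k \<in> QZ"
  unfolding less_4_cases by (elim disjE) (simp_all add: C6_rep_def gmat_QZ_iff in_Q_def f4_pow2 f4_pow3 f4_defs)

lemma C_rep_0: "C_rep 0 = one_QZ"
  by (simp add: C_rep_def one_QZ_def)

lemma C_rep_Q8Z: "C_rep 0 \<in> Q8Z" "C_rep 1 \<in> Q8Z"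
  by (simp_all add: C_rep_def gmat_Q8Z_iff in_Q_def f4_pow2 f4_pow3 f4_defs)

lemmas transversal_simps = C_rep_def C6_rep_def inv_QZ_gmat sd_mul_gmat Let_def frob_mat_gmat gmat_mul
  f4_pow2 f4_pow3 f4_frob_eq f4_defs

lemma C_transversal:
  assumes f: "odd f" and x: "x \<in> QZ"
  shows "\<exists>!j. j < 6 \<and> sd_mul f x (inv_QZ f (C_rep j)) \<in> Cgrp"
proof -
  let ?J = "{j \<in> {..<6}. sd_mul f x (inv_QZ f (C_rep j)) \<in> Cgrp}"
  obtain a b c n where x: "x = (gmat a b c, n)" "in_Q a b c" by (rule QZ_elim[OF x])
  have "(\<Sum>j<6. if sd_mul f x (inv_QZ f (C_rep j)) \<in> Cgrp then 1 else 0) = (1::nat)"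
    using x(2) unfolding x(1)
    by (elim in_Q_cases; cases "odd n")
      (simp_all add: lessThan_nat_numeral transversal_simps frobq_odd[OF f] gmat_C_iff in_C_def in_C4_def)
  then have "card ?J = 1" by (simp add: sum.inter_filter[symmetric])
  then obtain j0 where "?J = {j0}" by (rule card_1_singletonE)
  then show ?thesis by (auto simp: set_eq_iff)
qed

lemma C6_transversal:
  assumes f: "odd f" and x: "x \<in> QZ"
  shows "\<exists>k<4. sd_mul f x (inv_QZ f (C6_rep k)) \<in> C6Z"
proof -
  obtain a b c n where x: "x = (gmat a b c, n)" "in_Q a b c" by (rule QZ_elim[OF x])
  have "\<exists>k\<in>{..<4}. sd_mul f x (inv_QZ f (C6_rep k)) \<in> C6Z"
    using x(2) unfolding x(1)
    by (elim in_Q_cases; cases "odd n")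
      (simp_all add: lessThan_nat_numeral transversal_simps frobq_odd[OF f] gmat_C6Z_iff in_C6_def)
  then show ?thesis by auto
qed

lemma Q8Z_transversal:
  assumes f: "odd f" and x: "x \<in> Q8Z"
  shows "x \<in> Cgrp \<or> sd_mul f x (inv_QZ f (C_rep 1)) \<in> Cgrp"
proof -
  obtain a b c n where x: "x = (gmat a b c, n)" "in_Q a b c"
    using QZ_elim[of x] x Q8Z_subset_QZ by blast
  have "a = f4_one" using assms(2) by (simp add: x(1) gmat_Q8Z_iff)
  with x(2) show ?thesis unfolding x(1)
    by (elim in_Q_cases; cases "odd n")
      (simp_all add: transversal_simps frobq_odd[OF f] gmat_C_iff in_C_def in_C4_def)
qed

text \<open>The elements \<open>u\<^sup>m\<close> and \<open>u\<^sup>m t\<close> of \<open>C\<close> (\<open>u\<close> generating \<open>C\<^sub>4\<close>, \<open>t = (g(1,\<zeta>,\<zeta>), 1)\<close>),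
  indexed by \<open>2m\<close> and \<open>2m + 1\<close>.\<close>
definition C_elem :: "nat \<Rightarrow> mat3 \<times> int" where
  "C_elem i =
     [(gmat f4_one f4_zero f4_zero, 0), (gmat f4_one f4_zeta f4_zeta, 1),
      (gmat f4_one f4_one f4_zeta, 0), (gmat f4_one f4_zeta2 f4_zeta2, 1),
      (gmat f4_one f4_zero f4_one, 0), (gmat f4_one f4_zeta f4_zeta2, 1),
      (gmat f4_one f4_one f4_zeta2, 0), (gmat f4_one f4_zeta2 f4_zeta, 1)] ! i"

lemma C_elem_C: "i < 8 \<Longrightarrow> C_elem i \<in> Cgrp"
  unfolding less_8_cases
  by (elim disjE) (simp_all add: C_elem_def gmat_C_iff in_C_def in_C4_def f4_defs)

lemma C_elem_0: "C_elem 0 = one_QZ"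
  by (simp add: C_elem_def one_QZ_def)

lemma C_elem_mul:
  "sd_mul f (C_elem 2) (C_elem 2) = C_elem 4" "sd_mul f (C_elem 4) (C_elem 2) = C_elem 6"
  "sd_mul f (C_elem 2) (C_elem 1) = C_elem 3" "sd_mul f (C_elem 4) (C_elem 1) = C_elem 5"
  "sd_mul f (C_elem 6) (C_elem 1) = C_elem 7"
  by (simp_all add: C_elem_def transversal_simps frobq_eq)

lemma C_elem_1_square:
  "odd f \<Longrightarrow> sd_mul f (C_elem 1) (C_elem 1) = sd_mul f (C_elem 2) (gmat f4_one f4_zero f4_zero, 2)"
  by (simp add: C_elem_def transversal_simps frobq_eq)

text \<open>Read off from the double coset decomposition \<open>C6_rep_mul_inv_C_rep\<close> below; \<open>Psi_exp k j\<close>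
  becomes the exponent of \<open>D\<close> in the matrix of \<open>\<Psi>\<close>.\<close>
definition C3_part :: "nat \<Rightarrow> f4" where
  "C3_part j = [f4_one, f4_one, f4_zeta2, f4_zeta2, f4_zeta, f4_zeta] ! j"

definition Psi_exp :: "nat \<Rightarrow> nat \<Rightarrow> nat" where
  "Psi_exp k j = [[0, 7, 0, 7, 0, 7], [2, 5, 5, 6, 3, 0], [3, 0, 2, 5, 5, 6], [5, 6, 3, 0, 2, 5]] ! k ! j"

lemma Psi_exp_less_8: "k < 4 \<Longrightarrow> j < 6 \<Longrightarrow> Psi_exp k j < 8"
  unfolding less_4_cases less_6_cases by (elim disjE) (simp_all add: Psi_exp_def)

lemma C3_part_nonzero: "j < 6 \<Longrightarrow> C3_part j \<noteq> f4_zero"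
  unfolding less_6_cases by (elim disjE) (simp_all add: C3_part_def f4_defs)

lemma C6_rep_mul_inv_C_rep:
  assumes "odd f" and "k < 4" and "j < 6"
  shows "sd_mul f (C6_rep k) (inv_QZ f (C_rep j)) =
    sd_mul f (gmat (C3_part j) f4_zero f4_zero, - int (Psi_exp k j mod 2)) (C_elem (Psi_exp k j))"
  using assms(2,3) unfolding less_4_cases less_6_cases
  by (elim disjE) (simp_all add: C3_part_def Psi_exp_def C_elem_def transversal_simps frobq_odd[OF assms(1)])

lemma Ind_C_expansion:
  assumes f: "odd f" and F: "F \<in> Ind f Cgrp \<chi> QZ" and x: "x \<in> QZ"
  shows "F x = (\<Sum>j<6. F (C_rep j) * zero_extension Cgrp \<chi> (sd_mul f x (inv_QZ f (C_rep j))))"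
proof -
  let ?y = "\<lambda>j. sd_mul f x (inv_QZ f (C_rep j))"
  from C_transversal[OF f x] obtain j0 where j0: "j0 < 6" "?y j0 \<in> Cgrp"
    and uniq: "\<And>j. j < 6 \<Longrightarrow> ?y j \<in> Cgrp \<Longrightarrow> j = j0" by blast
  have "F (C_rep j) * zero_extension Cgrp \<chi> (?y j) = (if j = j0 then \<chi> (?y j0) * F (C_rep j0) else 0)"
    if "j < 6" for j
    using uniq[OF that] j0(2) unfolding zero_extension_def by (cases "j = j0") auto
  then have "(\<Sum>j<6. F (C_rep j) * zero_extension Cgrp \<chi> (?y j)) =
      (\<Sum>j<6. if j = j0 then \<chi> (?y j0) * F (C_rep j0) else 0)"
    by (intro sum.cong) simp_all
  also have "\<dots> = \<chi> (?y j0) * F (C_rep j0)" using j0 by simp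
  also have "\<dots> = F (sd_mul f (?y j0) (C_rep j0))"
    using Ind_equivariant[OF F j0(2) C_rep_QZ[OF j0(1)]] by simp
  also have "sd_mul f (?y j0) (C_rep j0) = x"
    by (simp add: sd_mul_assoc inv_QZ_left C_rep_QZ j0 one_QZ_right x)
  finally show ?thesis ..
qed

lemma Ind_C6Z_eq_zero:
  assumes f: "odd f" and G: "G \<in> Ind f C6Z \<chi> QZ" and zero: "\<And>k. k < 4 \<Longrightarrow> G (C6_rep k) = 0"
  shows "G = (\<lambda>_. 0)"
proof
  fix x
  show "G x = 0"
  proof (cases "x \<in> QZ")
    case True
    then obtain k where k: "k < 4" "sd_mul f x (inv_QZ f (C6_rep k)) \<in> C6Z"
      using C6_transversal[OF f] by blast
    have "x = sd_mul f (sd_mul f x (inv_QZ f (C6_rep k))) (C6_rep k)"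
      by (simp add: sd_mul_assoc inv_QZ_left C6_rep_QZ k(1) one_QZ_right True)
    then show ?thesis using Ind_equivariant[OF G k(2) C6_rep_QZ[OF k(1)]] zero[OF k(1)] by simp
  next
    case False
    then show ?thesis using Ind_outside[OF G] by simp
  qed
qed

lemma Ind_C_on_Q8Z:
  assumes f: "odd f" and G: "G \<in> Ind f Cgrp \<chi> X" and X: "one_QZ \<in> X" "C_rep 1 \<in> X"
    and x: "x \<in> Q8Z"
  shows "G x = (if x \<in> Cgrp then \<chi> x * G one_QZ
                else \<chi> (sd_mul f x (inv_QZ f (C_rep 1))) * G (C_rep 1))"
proof -
  have xQ: "x \<in> QZ" using x Q8Z_subset_QZ by blast
  show ?thesis
  proof (cases "x \<in> Cgrp")
    case True
    then show ?thesis using Ind_equivariant[OF G True X(1)] one_QZ_right[OF xQ] by simp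
  next
    case False
    then have c: "sd_mul f x (inv_QZ f (C_rep 1)) \<in> Cgrp" using Q8Z_transversal[OF f x] by simp
    have "sd_mul f (sd_mul f x (inv_QZ f (C_rep 1))) (C_rep 1) = x"
      by (simp add: sd_mul_assoc inv_QZ_left C_rep_QZ one_QZ_right xQ)
    then show ?thesis using Ind_equivariant[OF G c X(2)] False by simp
  qed
qed

section \<open>The linear system\<close>

lemma power_4_eq_minus_one_reduce:
  fixes D :: complex
  assumes "D ^ 4 = -1"
  shows "D ^ 5 = - D" "D ^ 6 = - (D ^ 2)" "D ^ 7 = - (D ^ 3)"
proof -
  have "D ^ (4 + k) = - (D ^ k)" for k using assms by (simp add: power_add)
  from this[of 1] this[of 2] this[of 3] show "D ^ 5 = - D" "D ^ 6 = - (D ^ 2)" "D ^ 7 = - (D ^ 3)"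
    by simp_all
qed

lemma Psi_exp_system_trivial:
  fixes D :: complex and v :: "nat \<Rightarrow> complex"
  assumes D: "D ^ 4 = -1" and v: "\<And>k. k < 4 \<Longrightarrow> (\<Sum>j<6. v j * D ^ Psi_exp k j) = 0"
    and v01: "v 0 = 0" "v 1 = 0" and j: "j < 6"
  shows "v j = 0"
proof -
  have "v 2 - D ^ 3 * v 3 + v 4 - D ^ 3 * v 5 = 0"
    "- D * v 2 - D\<^sup>2 * v 3 + D ^ 3 * v 4 + v 5 = 0"
    "D\<^sup>2 * v 2 - D * v 3 - D * v 4 - D\<^sup>2 * v 5 = 0"
    "D ^ 3 * v 2 + v 3 + D\<^sup>2 * v 4 - D * v 5 = 0"
    using v[of 0] v[of 1] v[of 2] v[of 3] v01
    by (simp_all add: lessThan_nat_numeral Psi_exp_def power_4_eq_minus_one_reduce[OF D] algebra_simps)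
  with D have "v 2 = 0" "v 3 = 0" "v 4 = 0" "v 5 = 0" by algebra+
  with v01 j show ?thesis unfolding less_6_cases by auto
qed

definition Psi_kernel_vec :: "complex \<Rightarrow> complex \<Rightarrow> complex \<Rightarrow> nat \<Rightarrow> complex" where
  "Psi_kernel_vec D x0 x1 j =
     (let p = (1 + D ^ 2) / 2; m = (1 - D ^ 2) / 2 in
       [x0, x1, - p * x0 - m * x1, p * x0 - m * x1, m * (x1 - x0), - p * (x0 + x1)] ! j)"

lemma Psi_kernel_vec_solves:
  fixes D :: complex
  assumes D: "D ^ 4 = -1" and k: "k < 4"
  shows "(\<Sum>j<6. Psi_kernel_vec D x0 x1 j * D ^ Psi_exp k j) = 0"
proof -
  let ?s = "\<lambda>k. \<Sum>j<6. Psi_kernel_vec D x0 x1 j * D ^ Psi_exp k j"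
  have "?s 0 = 0" "?s 1 = 0" "?s 2 = 0" "?s 3 = 0"
    using D by (simp_all add: lessThan_nat_numeral Psi_exp_def Psi_kernel_vec_def
      power_4_eq_minus_one_reduce[OF D] Let_def field_simps power2_eq_square power3_eq_cube) algebra+
  with k show ?thesis unfolding less_4_cases by auto
qed

section \<open>The kernel of \<open>\<Psi>\<close>\<close>

locale Psi_kernel_setting =
  fixes f :: nat and s \<eta> :: complex
    and \<phi> :: "mat3 \<Rightarrow> complex"
    and \<phi>1 \<phi>2 :: "mat3 \<times> int \<Rightarrow> complex"
    and \<Psi> :: "(mat3 \<times> int \<Rightarrow> complex) \<Rightarrow> (mat3 \<times> int \<Rightarrow> complex)"
  assumes f_odd: "odd f"
    and s_sqrt: "s ^ 2 = -2"
    and eta: "\<eta> ^ 2 + s ^ (f + 1) * \<eta> + of_nat (2 ^ f) = 0"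
    and phi_char: "(\<forall>x\<in>C4. \<phi> x \<noteq> 0) \<and> (\<forall>x\<in>C4. \<forall>y\<in>C4. \<phi> (mat_mul x y) = \<phi> x * \<phi> y)"
    and phi1_char: "is_character f Cgrp \<phi>1"
    and phi1_a: "\<phi>1 (gmat f4_one f4_zeta f4_zeta, 1) = \<eta> / of_nat (2 ^ f)"
    and phi1_b: "\<phi>1 (gmat f4_one f4_zero f4_zero, 2) = - 1 / of_nat (2 ^ f)"
    and phi2_char: "is_character f C6Z \<phi>2"
    and phi2_C6: "\<forall>z\<in>Zgrp. \<forall>c\<in>C3. \<phi>2 (mat_mul z c, 0) = \<phi> z"
    and phi2_b: "\<phi>2 (gmat f4_one f4_zero f4_zero, 1) = s ^ f / of_nat (2 ^ f)"
    and Psi_hom: "rep_hom QZ (ract f QZ) (ract f QZ) (Ind f Cgrp \<phi>1 QZ) (Ind f C6Z \<phi>2 QZ) \<Psi>"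
    and Psi_surj: "\<Psi> ` Ind f Cgrp \<phi>1 QZ = Ind f C6Z \<phi>2 QZ"
begin

abbreviation "V \<equiv> Ind f Cgrp \<phi>1 QZ"
abbreviation "W \<equiv> Ind f C6Z \<phi>2 QZ"
abbreviation "K \<equiv> {F \<in> V. \<Psi> F = (\<lambda>_. 0)}"

lemma Psi_mem: "F \<in> V \<Longrightarrow> \<Psi> F \<in> W"
  using Psi_hom unfolding rep_hom_def by blast

lemma Psi_add: "F1 \<in> V \<Longrightarrow> F2 \<in> V \<Longrightarrow> \<Psi> (\<lambda>x. F1 x + F2 x) = (\<lambda>y. \<Psi> F1 y + \<Psi> F2 y)"
  using Psi_hom unfolding rep_hom_def by blast

lemma Psi_smult: "F \<in> V \<Longrightarrow> \<Psi> (\<lambda>x. c * F x) = (\<lambda>y. c * \<Psi> F y)"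
  using Psi_hom unfolding rep_hom_def by blast

lemma Psi_ract: "g \<in> QZ \<Longrightarrow> F \<in> V \<Longrightarrow> \<Psi> (ract f QZ g F) = ract f QZ g (\<Psi> F)"
  using Psi_hom unfolding rep_hom_def by blast

lemma phi1_mul: "x \<in> Cgrp \<Longrightarrow> y \<in> Cgrp \<Longrightarrow> \<phi>1 (sd_mul f x y) = \<phi>1 x * \<phi>1 y"
  using phi1_char unfolding is_character_def by blast

lemma phi2_mul: "x \<in> C6Z \<Longrightarrow> y \<in> C6Z \<Longrightarrow> \<phi>2 (sd_mul f x y) = \<phi>2 x * \<phi>2 y"
  using phi2_char unfolding is_character_def by blast

lemma Psi_diff: "F1 \<in> K \<Longrightarrow> F2 \<in> K \<Longrightarrow> (\<lambda>x. F1 x + (-1) * F2 x) \<in> K"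
proof -
  assume F: "F1 \<in> K" "F2 \<in> K"
  have F2': "(\<lambda>x. (-1) * F2 x) \<in> V" using F Ind_smult by blast
  have "\<Psi> (\<lambda>x. F1 x + (-1) * F2 x) = (\<lambda>y. \<Psi> F1 y + \<Psi> (\<lambda>x. (-1) * F2 x) y)"
    using Psi_add[of F1 "\<lambda>x. (-1) * F2 x"] F F2' by simp
  then show ?thesis using F F2' Psi_smult[of F2 "-1"] Ind_add[OF _ F2', of F1] by simp
qed

definition F0 :: "mat3 \<times> int \<Rightarrow> complex" where
  "F0 = zero_extension Cgrp \<phi>1"

definition G0 :: "mat3 \<times> int \<Rightarrow> complex" where
  "G0 = \<Psi> F0"

lemma F0_mem: "F0 \<in> V"
  unfolding F0_def by (rule zero_extension_Ind[OF subgroup_C[OF f_odd] phi1_char])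

lemma G0_right: "c \<in> Cgrp \<Longrightarrow> y \<in> QZ \<Longrightarrow> G0 (sd_mul f y c) = \<phi>1 c * G0 y"
proof -
  assume c: "c \<in> Cgrp" and y: "y \<in> QZ"
  have cQ: "c \<in> QZ" using c subgroup_C[OF f_odd] unfolding subgroup_QZ_def by blast
  have "ract f QZ c G0 = \<Psi> (\<lambda>x. \<phi>1 c * F0 x)"
    unfolding G0_def using Psi_ract[OF cQ F0_mem]
      ract_zero_extension[OF subgroup_C[OF f_odd] phi1_char c] by (simp add: F0_def)
  also have "\<dots> = (\<lambda>y. \<phi>1 c * G0 y)" unfolding G0_def by (rule Psi_smult[OF F0_mem])
  finally show ?thesis using y unfolding ract_def by meson
qed

definition F_basis :: "nat \<Rightarrow> mat3 \<times> int \<Rightarrow> complex" where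
  "F_basis j = ract f QZ (inv_QZ f (C_rep j)) F0"

lemma F_basis_mem: "j < 6 \<Longrightarrow> F_basis j \<in> V"
  using ract_Ind[OF F0_mem inv_QZ_mem[OF C_rep_QZ]] subgroup_C[OF f_odd]
  unfolding F_basis_def subgroup_QZ_def by blast

lemma V_expansion: "F \<in> V \<Longrightarrow> F = (\<lambda>x. \<Sum>j<6. F (C_rep j) * F_basis j x)"
proof
  fix x assume F: "F \<in> V"
  show "F x = (\<Sum>j<6. F (C_rep j) * F_basis j x)"
    using Ind_C_expansion[OF f_odd F] Ind_outside[OF F] unfolding F_basis_def ract_def F0_def
    by (cases "x \<in> QZ") simp_all
qed

lemma F_basis_C_rep: "j < 6 \<Longrightarrow> k < 6 \<Longrightarrow> F_basis j (C_rep k) = (if j = k then 1 else 0)"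
proof -
  assume j: "j < 6" and k: "k < 6"
  let ?y = "\<lambda>j. sd_mul f (C_rep k) (inv_QZ f (C_rep j))"
  have kk: "?y k = one_QZ" by (rule inv_QZ_right[OF C_rep_QZ[OF k]])
  then have "?y k \<in> Cgrp" using subgroup_C[OF f_odd] unfolding subgroup_QZ_def by simp
  then have "?y j \<in> Cgrp \<longleftrightarrow> j = k" using C_transversal[OF f_odd C_rep_QZ[OF k]] j k by blast
  then show ?thesis
    using kk C_rep_QZ[OF k] character_one[OF phi1_char] subgroup_C[OF f_odd]
    unfolding F_basis_def ract_def F0_def zero_extension_def subgroup_QZ_def by auto
qed

lemma Psi_formula:
  assumes F: "F \<in> V" and y: "y \<in> QZ"
  shows "\<Psi> F y = (\<Sum>j<6. F (C_rep j) * G0 (sd_mul f y (inv_QZ f (C_rep j))))"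
proof -
  have "\<Psi> F = \<Psi> (\<lambda>x. \<Sum>j<6. F (C_rep j) * F_basis j x)"
    by (rule arg_cong[where f = \<Psi>, OF V_expansion[OF F]])
  also have "\<dots> = (\<lambda>y. \<Sum>j<6. F (C_rep j) * \<Psi> (F_basis j) y)"
    by (rule rep_hom_Ind_sum[OF Psi_hom F_basis_mem])
  finally have "\<Psi> F y = (\<Sum>j<6. F (C_rep j) * \<Psi> (F_basis j) y)" by simp
  also have "\<dots> = (\<Sum>j<6. F (C_rep j) * G0 (sd_mul f y (inv_QZ f (C_rep j))))"
    using Psi_ract[OF inv_QZ_mem[OF C_rep_QZ] F0_mem] y
    by (intro sum.cong) (simp_all add: F_basis_def ract_def G0_def)
  finally show ?thesis .
qed


definition q :: complex where "q = of_nat (2 ^ f)"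
definition \<alpha> :: complex where "\<alpha> = \<phi>1 (C_elem 1)"
definition \<beta> :: complex where "\<beta> = \<phi>1 (C_elem 2)"
definition \<gamma> :: complex where "\<gamma> = \<phi>2 (gmat f4_one f4_zero f4_zero, 1)"
definition D :: complex where "D = \<alpha> / \<gamma>"

lemma q_nonzero: "q \<noteq> 0"
  unfolding q_def by simp

lemma gamma_square: "\<gamma> * \<gamma> * q = -1"
proof -
  have "(q * \<gamma>) * (q * \<gamma>) = s ^ f * s ^ f"
    using phi2_b q_nonzero unfolding \<gamma>_def q_def[symmetric] by (simp add: field_simps)
  also have "\<dots> = (s ^ 2) ^ f" by (simp add: power_mult_distrib[symmetric] power2_eq_square)
  also have "\<dots> = q * (-1)" using s_sqrt f_odd by (simp add: q_def)
  finally have "q * (\<gamma> * \<gamma> * q) = q * (-1)" by (simp add: algebra_simps)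
  then show ?thesis using q_nonzero by (metis mult_cancel_left)
qed

lemma gamma_nonzero: "\<gamma> \<noteq> 0"
  using gamma_square by auto

lemma alpha_square: "\<alpha> * \<alpha> * q = - \<beta>"
proof -
  have C: "C_elem 1 \<in> Cgrp" "C_elem 2 \<in> Cgrp" "(gmat f4_one f4_zero f4_zero, 2) \<in> Cgrp"
    using C_elem_C by (simp_all add: gmat_C_iff in_C_def in_C4_def)
  have "\<alpha> * \<alpha> = \<phi>1 (sd_mul f (C_elem 2) (gmat f4_one f4_zero f4_zero, 2))"
    unfolding \<alpha>_def using phi1_mul[OF C(1) C(1)] C_elem_1_square[OF f_odd] by simp
  also have "\<dots> = \<beta> * (- 1 / q)" using phi1_mul[OF C(2,3)] phi1_b by (simp add: \<beta>_def q_def)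
  finally show ?thesis using q_nonzero by (simp add: field_simps)
qed

lemma D_square: "D ^ 2 = \<beta>"
proof -
  have "D ^ 2 * (\<gamma> * \<gamma> * q) = \<alpha> * \<alpha> * q"
    unfolding D_def using gamma_nonzero by (simp add: field_simps power2_eq_square)
  then show ?thesis unfolding gamma_square alpha_square by simp
qed

text \<open>The defining equation of \<open>\<eta>\<close> becomes \<open>D\<^sup>2 + sD - 1 = 0\<close>, whence \<open>D\<^sup>4 = -1\<close>
  because \<open>s\<^sup>2 = -2\<close>.\<close>
lemma D_pow_4: "D ^ 4 = -1"
proof -
  have eta_D: "\<eta> = D * \<gamma> * q" and s_pow: "s ^ (f + 1) = s * \<gamma> * q"
    using phi1_a phi2_b gamma_nonzero q_nonzero
    unfolding D_def \<alpha>_def \<gamma>_def C_elem_def q_def[symmetric] by (simp_all add: field_simps)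
  have "0 = \<eta> ^ 2 + s ^ (f + 1) * \<eta> + q" using eta by (simp add: q_def)
  also have "\<dots> = q * ((\<gamma> * \<gamma> * q) * D ^ 2 + (\<gamma> * \<gamma> * q) * s * D + 1)"
    unfolding eta_D s_pow by (simp add: algebra_simps power2_eq_square)
  finally have "q * (1 - s * D - D ^ 2) = 0" unfolding gamma_square by (simp add: algebra_simps)
  then have "1 - s * D - D ^ 2 = 0" using q_nonzero by simp
  then have quad: "D ^ 2 = 1 - s * D" by algebra
  have "D ^ 4 = (1 - s * D) ^ 2" by (simp flip: quad)
  also have "\<dots> = 1 - 2 * s * D + s ^ 2 * D ^ 2" by (simp add: power2_eq_square algebra_simps)
  also have "\<dots> = -1" unfolding s_sqrt quad by (simp add: algebra_simps)
  finally show ?thesis .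
qed


lemma phi1_C_elem: "i < 8 \<Longrightarrow> \<phi>1 (C_elem i) = D ^ i * \<gamma> ^ (i mod 2)"
proof -
  assume i: "i < 8"
  have C: "C_elem i \<in> Cgrp" if "i < 8" for i using C_elem_C that by simp
  have mul: "\<phi>1 (C_elem m) = \<phi>1 (C_elem k) * \<phi>1 (C_elem l)"
    if "sd_mul f (C_elem k) (C_elem l) = C_elem m" "k < 8" "l < 8" for k l m
    using phi1_mul[OF C C] that by metis
  have v0: "\<phi>1 (C_elem 0) = 1"
    using character_one[OF phi1_char] subgroup_C[OF f_odd] by (simp add: C_elem_0 subgroup_QZ_def)
  have v1: "\<phi>1 (C_elem 1) = D * \<gamma>" and v2: "\<phi>1 (C_elem 2) = D ^ 2"
    using gamma_nonzero D_square unfolding D_def \<alpha>_def \<beta>_def by simp_all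
  have v4: "\<phi>1 (C_elem 4) = D ^ 4" using mul[OF C_elem_mul(1)] v2 by (simp add: numeral_eq_Suc mult_ac)
  have v6: "\<phi>1 (C_elem 6) = D ^ 6" using mul[OF C_elem_mul(2)] v2 v4 by (simp add: numeral_eq_Suc mult_ac)
  have v3: "\<phi>1 (C_elem 3) = D ^ 3 * \<gamma>" using mul[OF C_elem_mul(3)] v1 v2 by (simp add: numeral_eq_Suc mult_ac)
  have v5: "\<phi>1 (C_elem 5) = D ^ 5 * \<gamma>" using mul[OF C_elem_mul(4)] v1 v4 by (simp add: numeral_eq_Suc mult_ac)
  have v7: "\<phi>1 (C_elem 7) = D ^ 7 * \<gamma>" using mul[OF C_elem_mul(5)] v1 v6 by (simp add: numeral_eq_Suc mult_ac)
  show ?thesis using i v0 v1 v2 v3 v4 v5 v6 v7 unfolding less_8_cases by auto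
qed

lemma phi2_C3:
  assumes a: "a \<noteq> f4_zero"
  shows "\<phi>2 (gmat a f4_zero f4_zero, - int (i mod 2)) = 1 / \<gamma> ^ (i mod 2)"
proof -
  let ?I = "gmat f4_one f4_zero f4_zero"
  have "?I \<in> C4" unfolding C4_eq by simp
  moreover have "mat_mul ?I ?I = ?I" by (simp add: gmat_mul f4_pow2)
  ultimately have "\<phi> ?I = 1" using phi_char by (metis mult_cancel_left1)
  moreover have "?I \<in> Zgrp" "gmat a f4_zero f4_zero \<in> C3" using a unfolding Zgrp_def C3_def by blast+
  moreover have "mat_mul ?I (gmat a f4_zero f4_zero) = gmat a f4_zero f4_zero" by (simp add: gmat_mul f4_pow2)
  ultimately have even_case: "\<phi>2 (gmat a f4_zero f4_zero, 0) = 1" using phi2_C6 by metis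
  have C6: "(gmat a f4_zero f4_zero, 0) \<in> C6Z" "(?I, 1) \<in> C6Z" "(?I, -1) \<in> C6Z"
    using a by (simp_all add: gmat_C6Z_iff in_C6_def f4_defs)
  have "\<gamma> * \<phi>2 (?I, -1) = \<phi>2 (sd_mul f (?I, 1) (?I, -1))" unfolding \<gamma>_def using phi2_mul[OF C6(2,3)] by simp
  also have "sd_mul f (?I, 1) (?I, -1) = one_QZ" by (simp add: one_QZ_def frob_mat_gmat gmat_mul f4_pow2)
  also have "\<phi>2 one_QZ = 1" using character_one[OF phi2_char] subgroup_C6Z unfolding subgroup_QZ_def by blast
  finally have "\<phi>2 (?I, -1) = 1 / \<gamma>" using gamma_nonzero by (simp add: field_simps)
  moreover have "sd_mul f (gmat a f4_zero f4_zero, 0) (?I, -1) = (gmat a f4_zero f4_zero, -1)"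
    by (simp add: frob_mat_gmat gmat_mul f4_pow2)
  ultimately have odd_case: "\<phi>2 (gmat a f4_zero f4_zero, -1) = 1 / \<gamma>"
    using phi2_mul[OF C6(1,3)] even_case by simp
  show ?thesis using even_case odd_case by (cases "even i") (simp_all add: even_iff_mod_2_eq_zero odd_iff_mod_2_eq_one)
qed

lemma G0_C6_rep_C_rep_inv:
  assumes k: "k < 4" and j: "j < 6"
  shows "G0 (sd_mul f (C6_rep k) (inv_QZ f (C_rep j))) = D ^ Psi_exp k j * G0 one_QZ"
proof -
  let ?e = "Psi_exp k j"
  let ?h = "(gmat (C3_part j) f4_zero f4_zero, - int (?e mod 2))"
  have e: "?e < 8" using Psi_exp_less_8[OF k j] .
  have h: "?h \<in> C6Z" using C3_part_nonzero[OF j] by (simp add: gmat_C6Z_iff in_C6_def)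
  have c: "C_elem ?e \<in> Cgrp" using C_elem_C[OF e] .
  have cQ: "C_elem ?e \<in> QZ" using c subgroup_C[OF f_odd] unfolding subgroup_QZ_def by blast
  have "G0 (sd_mul f (C6_rep k) (inv_QZ f (C_rep j))) = G0 (sd_mul f ?h (C_elem ?e))"
    using C6_rep_mul_inv_C_rep[OF f_odd k j] by simp
  also have "\<dots> = \<phi>2 ?h * G0 (C_elem ?e)"
    by (rule Ind_equivariant[OF Psi_mem[OF F0_mem] h cQ, folded G0_def])
  also have "G0 (C_elem ?e) = \<phi>1 (C_elem ?e) * G0 one_QZ"
    using G0_right[OF c one_QZ_mem] one_QZ_left[OF cQ] by simp
  finally show ?thesis
    using phi1_C_elem[OF e] phi2_C3[OF C3_part_nonzero[OF j]] gamma_nonzero by (simp add: field_simps)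
qed

lemma Psi_at_C6_rep:
  assumes F: "F \<in> V" and k: "k < 4"
  shows "\<Psi> F (C6_rep k) = G0 one_QZ * (\<Sum>j<6. F (C_rep j) * D ^ Psi_exp k j)"
  using Psi_formula[OF F C6_rep_QZ[OF k]] G0_C6_rep_C_rep_inv[OF k]
  by (simp add: sum_distrib_left mult_ac)

text \<open>Surjectivity of \<open>\<Psi>\<close> is used only here.\<close>
lemma G0_one_nonzero: "G0 one_QZ \<noteq> 0"
proof
  assume zero: "G0 one_QZ = 0"
  have "zero_extension C6Z \<phi>2 \<in> W" by (rule zero_extension_Ind[OF subgroup_C6Z phi2_char])
  then have "zero_extension C6Z \<phi>2 \<in> \<Psi> ` V" by (simp only: Psi_surj)
  then obtain F where F: "F \<in> V" and "\<Psi> F = zero_extension C6Z \<phi>2" by (elim imageE) simp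
  moreover have "\<Psi> F = (\<lambda>_. 0)"
    by (rule Ind_C6Z_eq_zero[OF f_odd Psi_mem[OF F]]) (simp add: Psi_at_C6_rep[OF F] zero)
  ultimately have "zero_extension C6Z \<phi>2 one_QZ = 0" by metis
  then show False
    using character_one[OF phi2_char] subgroup_C6Z
    unfolding zero_extension_def subgroup_QZ_def by simp
qed

lemma kernel_iff:
  assumes F: "F \<in> V"
  shows "\<Psi> F = (\<lambda>_. 0) \<longleftrightarrow> (\<forall>k<4. (\<Sum>j<6. F (C_rep j) * D ^ Psi_exp k j) = 0)"
proof
  assume zero: "\<Psi> F = (\<lambda>_. 0)"
  show "\<forall>k<4. (\<Sum>j<6. F (C_rep j) * D ^ Psi_exp k j) = 0"
  proof (intro allI impI)
    fix k :: nat assume "k < 4"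
    then have "G0 one_QZ * (\<Sum>j<6. F (C_rep j) * D ^ Psi_exp k j) = 0"
      using Psi_at_C6_rep[OF F] zero by metis
    then show "(\<Sum>j<6. F (C_rep j) * D ^ Psi_exp k j) = 0" using G0_one_nonzero by simp
  qed
next
  assume "\<forall>k<4. (\<Sum>j<6. F (C_rep j) * D ^ Psi_exp k j) = 0"
  then show "\<Psi> F = (\<lambda>_. 0)"
    by (intro Ind_C6Z_eq_zero[OF f_odd Psi_mem[OF F]]) (simp add: Psi_at_C6_rep[OF F])
qed


lemma kernel_eq_zero:
  assumes F: "F \<in> K" and F01: "F (C_rep 0) = 0" "F (C_rep 1) = 0"
  shows "F = (\<lambda>_. 0)"
proof -
  have "\<forall>k<4. (\<Sum>j<6. F (C_rep j) * D ^ Psi_exp k j) = 0" using F kernel_iff by blast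
  then have "F (C_rep j) = 0" if "j < 6" for j
    using Psi_exp_system_trivial[OF D_pow_4, of "\<lambda>j. F (C_rep j)"] F01 that by blast
  then show ?thesis using V_expansion[of F] F by simp
qed

lemma inj_on_restrict_kernel: "inj_on restrict_Q8Z K"
proof (rule inj_onI)
  fix F1 F2 assume F: "F1 \<in> K" "F2 \<in> K" and eq: "restrict_Q8Z F1 = restrict_Q8Z F2"
  have "F1 (C_rep 0) = F2 (C_rep 0)" "F1 (C_rep 1) = F2 (C_rep 1)"
    using fun_cong[OF eq] C_rep_Q8Z unfolding restrict_Q8Z_def by metis+
  then have "(\<lambda>x. F1 x + (-1) * F2 x) = (\<lambda>_. 0)"
    by (intro kernel_eq_zero[OF Psi_diff[OF F]]) simp_all
  then show "F1 = F2" by (simp add: fun_eq_iff eq_neg_iff_add_eq_0[symmetric])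
qed

lemma restrict_kernel_surj:
  assumes G: "G \<in> Ind f Cgrp \<phi>1 Q8Z"
  shows "G \<in> restrict_Q8Z ` K"
proof -
  let ?v = "Psi_kernel_vec D (G (C_rep 0)) (G (C_rep 1))"
  define F where "F = (\<lambda>x. \<Sum>j<6. ?v j * F_basis j x)"
  have FV: "F \<in> V" unfolding F_def by (rule Ind_sum[OF F_basis_mem])
  have F_C_rep: "F (C_rep k) = ?v k" if "k < 6" for k
  proof -
    have "F (C_rep k) = (\<Sum>j<6. if j = k then ?v k else 0)"
      unfolding F_def using that by (intro sum.cong) (simp_all add: F_basis_C_rep)
    then show ?thesis using that by simp
  qed
  have "\<forall>k<4. (\<Sum>j<6. F (C_rep j) * D ^ Psi_exp k j) = 0"
    using Psi_kernel_vec_solves[OF D_pow_4] by (simp add: F_C_rep)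
  then have FK: "F \<in> K" using kernel_iff FV by blast
  have "restrict_Q8Z F = G"
  proof
    fix x
    show "restrict_Q8Z F x = G x"
    proof (cases "x \<in> Q8Z")
      case True
      show ?thesis
        using Ind_C_on_Q8Z[OF f_odd FV one_QZ_mem C_rep_QZ True] True
          Ind_C_on_Q8Z[OF f_odd G _ C_rep_Q8Z(2) True] C_rep_Q8Z(1) F_C_rep[of 0] F_C_rep[of 1]
        by (simp add: restrict_Q8Z_def C_rep_0 Psi_kernel_vec_def)
    next
      case False
      then show ?thesis unfolding restrict_Q8Z_def using Ind_outside[OF G False] by simp
    qed
  qed
  then show ?thesis using FK by blast
qed

lemma restrict_kernel_rep_iso:
  "rep_iso Q8Z (ract f QZ) (ract f Q8Z) K (Ind f Cgrp \<phi>1 Q8Z) restrict_Q8Z"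
  unfolding rep_iso_def rep_hom_def
proof (intro conjI ballI allI)
  fix F assume "F \<in> K"
  then show "restrict_Q8Z F \<in> Ind f Cgrp \<phi>1 Q8Z" using restrict_Q8Z_Ind by blast
next
  fix F1 F2 :: "mat3 \<times> int \<Rightarrow> complex"
  show "restrict_Q8Z (\<lambda>x. F1 x + F2 x) = (\<lambda>y. restrict_Q8Z F1 y + restrict_Q8Z F2 y)"
    by (simp add: restrict_Q8Z_def fun_eq_iff)
next
  fix c :: complex and F :: "mat3 \<times> int \<Rightarrow> complex"
  show "restrict_Q8Z (\<lambda>x. c * F x) = (\<lambda>y. c * restrict_Q8Z F y)"
    by (simp add: restrict_Q8Z_def fun_eq_iff)
next
  fix g F assume "g \<in> Q8Z"
  then show "restrict_Q8Z (ract f QZ g F) = ract f Q8Z g (restrict_Q8Z F)" by (rule restrict_Q8Z_ract)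
next
  show "bij_betw restrict_Q8Z K (Ind f Cgrp \<phi>1 Q8Z)"
    unfolding bij_betw_def using inj_on_restrict_kernel restrict_kernel_surj restrict_Q8Z_Ind by blast
qed

end

theorem lemma3p2:
  fixes f :: nat and s \<eta> :: complex
    and \<phi> :: "mat3 \<Rightarrow> complex"
    and \<phi>1 \<phi>2 :: "mat3 \<times> int \<Rightarrow> complex"
    and \<Psi> :: "(mat3 \<times> int \<Rightarrow> complex) \<Rightarrow> (mat3 \<times> int \<Rightarrow> complex)"
  assumes f_odd: "odd f"
    and s_sqrt: "s ^ 2 = -2"
    and eta: "\<eta> ^ 2 + s ^ (f + 1) * \<eta> + of_nat (2 ^ f) = 0"
    and phi_char: "(\<forall>x\<in>C4. \<phi> x \<noteq> 0) \<and> (\<forall>x\<in>C4. \<forall>y\<in>C4. \<phi> (mat_mul x y) = \<phi> x * \<phi> y)"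
    and phi_faithful: "inj_on \<phi> C4"
    and phi1_char: "is_character f Cgrp \<phi>1"
    and phi1_a: "\<phi>1 (gmat f4_one f4_zeta f4_zeta, 1) = \<eta> / of_nat (2 ^ f)"
    and phi1_b: "\<phi>1 (gmat f4_one f4_zero f4_zero, 2) = - 1 / of_nat (2 ^ f)"
    and phi2_char: "is_character f C6Z \<phi>2"
    and phi2_C6: "\<forall>z\<in>Zgrp. \<forall>c\<in>C3. \<phi>2 (mat_mul z c, 0) = \<phi> z"
    and phi2_b: "\<phi>2 (gmat f4_one f4_zero f4_zero, 1) = s ^ f / of_nat (2 ^ f)"
    and Psi_hom: "rep_hom QZ (ract f QZ) (ract f QZ) (Ind f Cgrp \<phi>1 QZ) (Ind f C6Z \<phi>2 QZ) \<Psi>"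
    and Psi_surj: "\<Psi> ` Ind f Cgrp \<phi>1 QZ = Ind f C6Z \<phi>2 QZ"
  shows "\<exists>\<Phi>. rep_iso Q8Z (ract f QZ) (ract f Q8Z)
              {F \<in> Ind f Cgrp \<phi>1 QZ. \<Psi> F = (\<lambda>_. 0)} (Ind f Cgrp \<phi>1 Q8Z) \<Phi>"
proof -
  interpret Psi_kernel_setting f s \<eta> \<phi> \<phi>1 \<phi>2 \<Psi>
    using f_odd s_sqrt eta phi_char phi1_char phi1_a phi1_b phi2_char phi2_C6 phi2_b Psi_hom Psi_surj
    by unfold_locales
  show ?thesis using restrict_kernel_rep_iso by blast
qed

end
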